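(* Let $O\in\mathbb{R}^2$, let $v$ be a uniform random point in $[0,1]^2$, and let $D$ be the diameter of $[0,1]^2\cup\{O\}$. Then $D\le 5\,\mathbb{E}(d(O,v))$.
   Context: $d$ is Euclidean distance. *)

theory Defs
  imports "HOL-Analysis.Analysis"
begin

end

theory Submission
  imports Defs
begin

text \<open>Let \<open>Q\<close> be the unit square with centre \<open>c\<close> and \<open>I(p)\<close> the integral of \<open>dist p\<close> over \<open>Q\<close>.
  The reflection \<open>v \<mapsto> One - v\<close> preserves \<open>Q\<close>, so \<open>2 I(p)\<close> is the integral of
  \<open>dist p v + dist p (One - v)\<close>; by the triangle inequality this sum is at least
  \<open>dist v (One - v) = 2 dist c v\<close> and at least \<open>dist p (One - p) = 2 dist p c\<close>.
  Hence \<open>I(p) \<ge> I(c)\<close> and \<open>I(p) \<ge> dist p c\<close>. Bounding \<open>dist c\<close> from below by a staircase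
  function of the sup-distance to \<open>c\<close>, whose level sets are concentric squares, gives
  \<open>I(c) \<ge> 125/432 > sqrt 2 / 5\<close>. Since every point of \<open>Q\<close> is within \<open>sqrt 2 / 2\<close> of \<open>c\<close>,
  the diameter of \<open>Q \<union> {p}\<close> is at most \<open>max (sqrt 2) (I(p) + sqrt 2 / 2) \<le> 5 I(p)\<close>.\<close>

lemma reflect_cbox_image:
  fixes a b :: "'a::euclidean_space"
  shows "(\<lambda>x. a + b - x) ` cbox a b = cbox a b"
proof -
  have "(\<lambda>x. a + b - x) = (\<lambda>x. (-1) *\<^sub>R x + (a + b))"
    by auto
  then show ?thesis
    using image_affinity_cbox[of "-1" "a + b" a b] by auto
qed

lemma has_integral_reflect_cbox:
  fixes f :: "'a::euclidean_space \<Rightarrow> 'b::real_normed_vector"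
  assumes "(f has_integral i) (cbox a b)"
  shows "((\<lambda>x. f (a + b - x)) has_integral i) (cbox a b)"
  using has_integral_affinity[OF assms, of "-1" "a + b"] reflect_cbox_image[of a b]
  by (simp add: add.commute[of b a])

lemma dist_reflect_eq_twice_dist_midpoint:
  fixes a b x :: "'a::real_normed_vector"
  shows "dist x (a + b - x) = 2 * dist (midpoint a b) x"
proof -
  have "x - (a + b - x) = 2 *\<^sub>R (x - midpoint a b)"
    by (simp add: midpoint_def algebra_simps scaleR_2)
  then show ?thesis
    by (simp add: dist_norm norm_minus_commute)
qed

lemma dist_midpoint_le_half_diameter:
  fixes a b x :: "'a::euclidean_space"
  assumes "x \<in> cbox a b"
  shows "dist (midpoint a b) x \<le> diameter (cbox a b) / 2"
proof -
  have "a + b - x \<in> cbox a b"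
    using assms reflect_cbox_image by blast
  then have "dist x (a + b - x) \<le> diameter (cbox a b)"
    using assms by (intro diameter_bounded_bound) auto
  then show ?thesis
    by (simp add: dist_reflect_eq_twice_dist_midpoint)
qed

lemma diameter_cbox_insert_le:
  fixes a b p :: "'a::euclidean_space"
  shows "diameter (cbox a b \<union> {p})
           \<le> max (diameter (cbox a b)) (dist p (midpoint a b) + diameter (cbox a b) / 2)"
proof (rule diameter_le)
  have far_from_p: "dist p x \<le> dist p (midpoint a b) + diameter (cbox a b) / 2"
    if "x \<in> cbox a b \<union> {p}" for x
  proof (cases "x = p")
    case True
    then show ?thesis
      by (simp add: diameter_ge_0)
  next
    case False
    then have "dist (midpoint a b) x \<le> diameter (cbox a b) / 2"
      using that dist_midpoint_le_half_diameter[of x a b] by simp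
    then show ?thesis
      using dist_triangle[of p x "midpoint a b"] by linarith
  qed
  fix x y
  assume x: "x \<in> cbox a b \<union> {p}" and y: "y \<in> cbox a b \<union> {p}"
  show "norm (x - y)
          \<le> max (diameter (cbox a b)) (dist p (midpoint a b) + diameter (cbox a b) / 2)"
  proof (cases "x = p \<or> y = p")
    case True
    then have "dist x y \<le> dist p (midpoint a b) + diameter (cbox a b) / 2"
      using far_from_p[OF x] far_from_p[OF y] by (auto simp: dist_commute)
    then show ?thesis
      by (simp add: dist_norm le_max_iff_disj)
  next
    case False
    then have "dist x y \<le> diameter (cbox a b)"
      using x y by (intro diameter_bounded_bound) auto
    then show ?thesis
      by (simp add: dist_norm le_max_iff_disj)
  qed
qed simp

lemma has_integral_dist_add_dist_reflect:
  fixes a b p :: "'a::euclidean_space"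
  shows "((\<lambda>v. dist p v + dist p (a + b - v))
           has_integral 2 * integral (cbox a b) (dist p)) (cbox a b)"
proof -
  have "(dist p has_integral integral (cbox a b) (dist p)) (cbox a b)"
    by (intro integrable_integral integrable_continuous continuous_intros)
  from has_integral_add[OF this has_integral_reflect_cbox[OF this]] show ?thesis
    by simp
qed

lemma integral_dist_midpoint_le:
  fixes a b p :: "'a::euclidean_space"
  shows "integral (cbox a b) (dist (midpoint a b)) \<le> integral (cbox a b) (dist p)"
proof -
  have "((\<lambda>v. 2 * dist (midpoint a b) v)
          has_integral 2 * integral (cbox a b) (dist (midpoint a b))) (cbox a b)"
    using has_integral_mult_right[OF integrable_integral, of "dist (midpoint a b)" "cbox a b" 2]
    by (simp add: integrable_continuous continuous_on_dist)
  then have "2 * integral (cbox a b) (dist (midpoint a b)) \<le> 2 * integral (cbox a b) (dist p)"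
  proof (rule has_integral_le[OF _ has_integral_dist_add_dist_reflect])
    show "2 * dist (midpoint a b) v \<le> dist p v + dist p (a + b - v)" for v
      using dist_triangle[of v "a + b - v" p]
      by (simp add: dist_reflect_eq_twice_dist_midpoint dist_commute)
  qed
  then show ?thesis
    by simp
qed

lemma measure_mul_dist_midpoint_le_integral_dist:
  fixes a b p :: "'a::euclidean_space"
  shows "measure lborel (cbox a b) * dist p (midpoint a b) \<le> integral (cbox a b) (dist p)"
proof -
  have "((\<lambda>v. 2 * dist p (midpoint a b))
          has_integral measure lborel (cbox a b) * (2 * dist p (midpoint a b))) (cbox a b)"
    using has_integral_const[of "2 * dist p (midpoint a b)" a b] by simp
  then have "measure lborel (cbox a b) * (2 * dist p (midpoint a b))
               \<le> 2 * integral (cbox a b) (dist p)"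
  proof (rule has_integral_le[OF _ has_integral_dist_add_dist_reflect])
    fix v
    have "dist v (a + b - p) = dist p (a + b - v)"
      by (simp add: dist_norm algebra_simps)
    then show "2 * dist p (midpoint a b) \<le> dist p v + dist p (a + b - v)"
      using dist_triangle[of p "a + b - p" v]
      by (simp add: dist_reflect_eq_twice_dist_midpoint dist_commute)
  qed
  then show ?thesis
    by simp
qed

text \<open>\<open>One\<close> abbreviates \<open>\<Sum>Basis\<close>: this is \<open>One $ i = 1\<close> in simp normal form.\<close>

lemma One_nth_cart [simp]: "(\<Sum>b\<in>(Basis::(real^'n) set). b $ i) = 1"
  using cart_eq_inner_axis[of One i] by simp

lemma norm_One_cart: "norm (One::real^'n) = sqrt CARD('n)"
  by (simp add: norm_vec_def L2_set_def)

lemma dist_gt_outside_cbox_cart: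
  fixes c v :: "real^'n"
  assumes "v \<notin> cbox (c - t *\<^sub>R One) (c + t *\<^sub>R One)"
  shows "t < dist c v"
proof -
  obtain i where "\<not> (c$i - t \<le> v$i \<and> v$i \<le> c$i + t)"
    using assms by (auto simp: mem_box_cart)
  then have "t < \<bar>(c - v) $ i\<bar>"
    by auto
  also have "\<dots> \<le> dist c v"
    using component_le_norm_cart[of "c - v" i] by (simp add: dist_norm)
  finally show ?thesis .
qed

lemma has_integral_outside_centred_subcube:
  fixes t :: real
  assumes "0 \<le> t" "t \<le> 1/2"
  defines "C \<equiv> cbox (midpoint 0 One - t *\<^sub>R One) (midpoint 0 One + t *\<^sub>R (One::real^'n))"
  shows "((\<lambda>v. if v \<in> C then 0 else 1) has_integral 1 - (2 * t) ^ CARD('n)) (cbox 0 One)"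
proof -
  have sub: "C \<subseteq> cbox 0 One"
    unfolding C_def using assms by (intro subset_interval_imp_cart(1)) (simp add: midpoint_def)
  have vol: "measure lborel C = (2 * t) ^ CARD('n)"
  proof -
    have "midpoint 0 One \<in> C"
      unfolding C_def using assms by (simp add: mem_box_cart)
    then have "measure lborel C = (\<Prod>i\<in>(UNIV::'n set). 2 * t)"
      unfolding C_def by (subst content_cbox_cart) auto
    then show ?thesis
      by simp
  qed
  have "((\<lambda>v. if v \<in> C then 1 else 0) has_integral (2 * t) ^ CARD('n)) (cbox 0 One)"
    using has_integral_restrict_closed_subinterval
        [OF has_integral_const[of "1::real"] sub[unfolded C_def], folded C_def] vol
    by simp
  from has_integral_diff[OF has_integral_const[of "1::real" 0 One] this] show ?thesis
    by (simp add: if_distrib cong: if_cong)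
qed

lemma sum_threshold_le:
  fixes h m :: real
  assumes "0 \<le> h" "0 \<le> m"
  shows "(\<Sum>k=1..n. if real k * h < m then h else 0) \<le> min m (real n * h)"
proof (induction n)
  case (Suc n)
  then show ?case
    by (auto simp: algebra_simps)
qed (use assms in simp)

lemma integral_dist_midpoint_unit_square_ge:
  "125/432 \<le> integral (cbox 0 (One::real^2)) (dist (midpoint 0 One))"
proof -
  define c :: "real^2" where "c = midpoint 0 One"
  define C :: "nat \<Rightarrow> (real^2) set"
    where "C k = cbox (c - (real k / 12) *\<^sub>R One) (c + (real k / 12) *\<^sub>R One)" for k
  define g :: "real^2 \<Rightarrow> real"
    where "g v = (\<Sum>k=1..5. 1/12 * (if v \<in> C k then 0 else 1))" for v
  have "(g has_integral (\<Sum>k=1..5::nat. 1/12 * (1 - (2 * (real k / 12)) ^ CARD(2)))) (cbox 0 One)"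
    unfolding g_def C_def c_def
    by (intro has_integral_sum has_integral_mult_right has_integral_outside_centred_subcube) auto
  then have g_integral: "(g has_integral 125/432) (cbox 0 One)"
    by (simp add: eval_nat_numeral)
  have dist_integral: "(dist c has_integral integral (cbox 0 One) (dist c)) (cbox 0 One)"
    by (intro integrable_integral integrable_continuous continuous_intros)
  have g_le: "g v \<le> dist c v" for v
  proof -
    have "g v \<le> (\<Sum>k=1..5. if real k * (1/12) < dist c v then 1/12 else 0)"
      unfolding g_def
    proof (intro sum_mono)
      show "(1/12::real) * (if v \<in> C k then 0 else 1) \<le> (if real k * (1/12) < dist c v then 1/12 else 0)"
        for k
        using dist_gt_outside_cbox_cart[of v c "real k / 12"] by (auto simp: C_def)
    qed
    also have "\<dots> \<le> dist c v"
      using sum_threshold_le[of "1/12" "dist c v" 5] by simp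
    finally show ?thesis .
  qed
  show ?thesis
    using has_integral_le[OF g_integral dist_integral g_le] by (simp add: c_def)
qed

theorem lemma18:
  fixes p :: "real^2"
  shows "diameter (cbox (0::real^2) One \<union> {p})
           \<le> 5 * integral (cbox (0::real^2) One) (\<lambda>v. dist p v)"
proof -
  define c :: "real^2" where "c = midpoint 0 One"
  define I where "I = integral (cbox 0 One) (dist p)"
  have "dist p c \<le> I"
    using measure_mul_dist_midpoint_le_integral_dist[of 0 One p] by (simp add: c_def I_def)
  moreover have "125/432 \<le> I"
    using integral_dist_midpoint_unit_square_ge integral_dist_midpoint_le[of 0 One p]
    by (simp add: I_def)
  moreover have "sqrt 2 \<le> (625/432::real)"
    by (rule real_le_lsqrt) (simp_all add: power2_eq_square)
  moreover have "diameter (cbox 0 (One::real^2)) = sqrt 2"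
    by (simp add: diameter_cbox dist_norm norm_One_cart)
  moreover note diameter_cbox_insert_le[of 0 One p]
  ultimately show ?thesis
    unfolding c_def I_def by simp
qed

end
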